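(* Let $G$ be a weighted graph, $s\in[0,1]^V$ a vector of innate opinions, $z=(I+L)^{-1}s$ the equilibrium opinions, and $P=P(z)$. Let $k\in\mathbb{N}$ and let $s'\in[0,1]^V$ satisfy $\|s'-s\|_0\le k$. Let $z'=(I+L)^{-1}s'$ and $P'=P(z')$. Then $P'\le P+3k$.
   Context: $G=(V,E,w)$ is a weighted undirected graph on $n=|V|$ vertices, with weights $w_{u,v}\in(0,1]$ for $(u,v)\in E$ and $w_{u,v}=0$ otherwise (and $w_{v,v}=0$). $L=\mathrm{Diag}(d)-A$ is the weighted Laplacian, where $A_{u,v}=w_{u,v}$ and $d_v=\sum_u w_{v,u}$. Polarization of a vector $z\in\mathbb{R}^V$ is $P(z)=\sum_{v\in V}(z_v-\bar z)^2$ with $\bar z=\frac1n\sum_v z_v$. $\|x\|_0$ denotes the number of nonzero coordinates of $x$. *)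

theory Defs
  imports "HOL-Analysis.Analysis"
begin

text \<open>Vertex set V is a finite type 'n. Weights w u v; the graph is weighted undirected:
  w symmetric, w v v = 0, w u v in [0,1] (edges are exactly pairs with positive weight).\<close>

definition weighted_graph :: "('n::finite \<Rightarrow> 'n \<Rightarrow> real) \<Rightarrow> bool" where
  "weighted_graph w \<longleftrightarrow> (\<forall>u v. w u v = w v u) \<and> (\<forall>v. w v v = 0) \<and>
     (\<forall>u v. 0 \<le> w u v \<and> w u v \<le> 1)"

definition degree :: "('n::finite \<Rightarrow> 'n \<Rightarrow> real) \<Rightarrow> 'n \<Rightarrow> real" where
  "degree w v = (\<Sum>u\<in>UNIV. w v u)"

definition laplacian :: "('n::finite \<Rightarrow> 'n \<Rightarrow> real) \<Rightarrow> real^'n^'n" where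
  "laplacian w = (\<chi> u v. (if u = v then degree w u else 0) - w u v)"

definition equilibrium :: "('n::finite \<Rightarrow> 'n \<Rightarrow> real) \<Rightarrow> real^'n \<Rightarrow> real^'n" where
  "equilibrium w s = matrix_inv (mat 1 + laplacian w) *v s"

definition polarization :: "real^'n::finite \<Rightarrow> real" where
  "polarization z = (\<Sum>v\<in>UNIV. (z $ v - (\<Sum>u\<in>UNIV. z $ u) / real CARD('n))^2)"

definition l0norm :: "real^'n::finite \<Rightarrow> nat" where
  "l0norm x = card {v. x $ v \<noteq> 0}"

end

theory Submission
  imports Defs
begin

text \<open>Write \<open>M = I + L\<close>. Since \<open>(M z)\<^sub>v = z\<^sub>v + \<Sum>\<^sub>u w\<^sub>v\<^sub>u (z\<^sub>v - z\<^sub>u)\<close> with nonnegative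
  weights, \<open>M\<close> obeys a maximum principle: the entries of \<open>M\<^sup>-\<^sup>1 x\<close> lie in any interval
  containing the entries of \<open>x\<close>; in particular \<open>M\<close> is invertible. Expanding the squares,
  \<open>P(z') - P(z) = \<langle>z' - z, c\<rangle>\<close> where \<open>c\<close> is \<open>z + z'\<close> minus the sum of the two means,
  so its entries lie in \<open>[-2, 2]\<close>. As \<open>z' - z = M\<^sup>-\<^sup>1 (s' - s)\<close> and \<open>M\<close> is symmetric,
  \<open>\<langle>z' - z, c\<rangle> = \<langle>s' - s, M\<^sup>-\<^sup>1 c\<rangle>\<close>; here \<open>s' - s\<close> has at most \<open>k\<close> nonzero entries,
  each in \<open>[-1, 1]\<close>, and \<open>M\<^sup>-\<^sup>1 c\<close> has entries in \<open>[-2, 2]\<close>. This even gives \<open>P' \<le> P + 2k\<close>.\<close>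

lemma matrix_inv_right:
  fixes A :: "'a::semiring_1^'n^'m"
  assumes "invertible A"
  shows "A ** matrix_inv A = mat 1"
  using assms unfolding invertible_def matrix_inv_def
  by (rule someI_ex[where P = "\<lambda>A'. A ** A' = mat 1 \<and> A' ** A = mat 1", THEN conjunct1])

abbreviation opinion_matrix :: "('n::finite \<Rightarrow> 'n \<Rightarrow> real) \<Rightarrow> real^'n^'n" where
  "opinion_matrix w \<equiv> mat 1 + laplacian w"

lemma opinion_matrix_mult:
  "(opinion_matrix w *v z) $ v = z $ v + (\<Sum>u\<in>UNIV. w v u * (z $ v - z $ u))"
proof -
  have "(opinion_matrix w *v z) $ v
      = (\<Sum>u\<in>UNIV. (if v = u then (1 + degree w v) * z $ u else 0) - w v u * z $ u)"
    by (auto simp: matrix_vector_mult_def laplacian_def mat_def algebra_simps intro!: sum.cong)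
  also have "\<dots> = z $ v + (\<Sum>u\<in>UNIV. w v u * (z $ v - z $ u))"
    by (simp add: degree_def algebra_simps sum_subtractf sum_distrib_left)
  finally show ?thesis .
qed

lemma opinion_matrix_upper_bound:
  assumes nonneg: "\<forall>u v. 0 \<le> w u v"
    and bound: "\<And>v. (opinion_matrix w *v z) $ v \<le> b"
  shows "z $ v \<le> b"
proof -
  have "Max (range (($) z)) \<in> range (($) z)"
    by (rule Max_in) auto
  then obtain m where "z $ m = Max (range (($) z))"
    by (metis rangeE)
  then have max: "z $ u \<le> z $ m" for u
    by simp
  have "0 \<le> (\<Sum>u\<in>UNIV. w m u * (z $ m - z $ u))"
    using nonneg max by (intro sum_nonneg mult_nonneg_nonneg) simp_all
  then have "z $ m \<le> b"
    using bound[of m] by (simp add: opinion_matrix_mult)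
  then show ?thesis
    using max[of v] by linarith
qed

lemma opinion_matrix_bounds:
  assumes nonneg: "\<forall>u v. 0 \<le> w u v"
    and bounds: "\<And>v. a \<le> (opinion_matrix w *v z) $ v \<and> (opinion_matrix w *v z) $ v \<le> b"
  shows "a \<le> z $ v \<and> z $ v \<le> b"
proof
  show "z $ v \<le> b"
    using opinion_matrix_upper_bound[OF nonneg] bounds by blast
  have "opinion_matrix w *v (- z) = - (opinion_matrix w *v z)"
    using matrix_vector_mult_diff_distrib[of "opinion_matrix w" 0 z] by simp
  then have "(opinion_matrix w *v (- z)) $ u \<le> - a" for u
    using bounds[of u] by simp
  then show "a \<le> z $ v"
    using opinion_matrix_upper_bound[OF nonneg, of "- z" "- a"] by simp
qed

lemma invertible_opinion_matrix:
  assumes "\<forall>u v. 0 \<le> w u v"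
  shows "invertible (opinion_matrix w)"
proof -
  have "x = 0" if "opinion_matrix w *v x = 0" for x
    using opinion_matrix_bounds[OF assms, of 0 x 0] that by (auto simp: vec_eq_iff intro: order_antisym)
  then show ?thesis
    by (simp add: invertible_left_inverse matrix_left_invertible_ker)
qed

lemma opinion_matrix_mult_equilibrium:
  assumes "\<forall>u v. 0 \<le> w u v"
  shows "opinion_matrix w *v equilibrium w s = s"
  unfolding equilibrium_def matrix_vector_mul_assoc matrix_inv_right[OF invertible_opinion_matrix[OF assms]]
  by simp

lemma equilibrium_bounds:
  assumes "\<forall>u v. 0 \<le> w u v" and "\<And>v. a \<le> s $ v \<and> s $ v \<le> b"
  shows "a \<le> equilibrium w s $ v \<and> equilibrium w s $ v \<le> b"
  by (rule opinion_matrix_bounds[OF assms(1)]) (simp only: opinion_matrix_mult_equilibrium[OF assms(1)] assms(2))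

lemma equilibrium_diff: "equilibrium w s' - equilibrium w s = equilibrium w (s' - s)"
  by (simp add: equilibrium_def matrix_vector_mult_diff_distrib)

lemma transpose_opinion_matrix:
  assumes "\<forall>u v. w u v = w v u"
  shows "transpose (opinion_matrix w) = opinion_matrix w"
  by (simp add: vec_eq_iff transpose_def laplacian_def mat_def assms)

lemma equilibrium_inner_commute:
  assumes "weighted_graph w"
  shows "equilibrium w x \<bullet> y = x \<bullet> equilibrium w y"
proof -
  have nonneg: "\<forall>u v. 0 \<le> w u v" and sym: "\<forall>u v. w u v = w v u"
    using assms by (auto simp: weighted_graph_def)
  let ?M = "opinion_matrix w" and ?e = "equilibrium w x" and ?f = "equilibrium w y"
  have "?e \<bullet> y = ?e \<bullet> (?M *v ?f)"
    by (simp add: opinion_matrix_mult_equilibrium[OF nonneg])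
  also have "\<dots> = (transpose ?M *v ?e) \<bullet> ?f"
    by (simp add: dot_lmul_matrix)
  also have "\<dots> = x \<bullet> ?f"
    by (simp only: transpose_opinion_matrix[OF sym] opinion_matrix_mult_equilibrium[OF nonneg])
  finally show ?thesis .
qed

definition mean :: "real^'n::finite \<Rightarrow> real" where
  "mean z = (\<Sum>u\<in>UNIV. z $ u) / real CARD('n)"

lemma mean_bounds:
  fixes z :: "real^'n::finite"
  assumes "\<And>v. a \<le> z $ v \<and> z $ v \<le> b"
  shows "a \<le> mean z \<and> mean z \<le> b"
proof -
  have "(\<Sum>u\<in>(UNIV::'n set). a) \<le> (\<Sum>u\<in>UNIV. z $ u)"
    by (rule sum_mono) (simp add: assms)
  moreover have "(\<Sum>u\<in>UNIV. z $ u) \<le> (\<Sum>u\<in>(UNIV::'n set). b)"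
    by (rule sum_mono) (simp add: assms)
  ultimately show ?thesis
    by (simp add: mean_def pos_le_divide_eq pos_divide_le_eq mult.commute)
qed

lemma polarization_diff:
  fixes z z' :: "real^'n::finite"
  shows "polarization z' - polarization z = (z' - z) \<bullet> (\<chi> v. z $ v + z' $ v - mean z - mean z')"
proof -
  define c where "c = (\<chi> v. z $ v + z' $ v - mean z - mean z')"
  have centered: "(\<Sum>v\<in>UNIV. c $ v) = 0"
    by (simp add: c_def mean_def sum.distrib sum_subtractf)
  have "polarization z' - polarization z = (\<Sum>v\<in>UNIV. (z' $ v - mean z')\<^sup>2 - (z $ v - mean z)\<^sup>2)"
    by (simp add: polarization_def mean_def sum_subtractf)
  also have "\<dots> = (\<Sum>v\<in>UNIV. (z' - z) $ v * c $ v - (mean z' - mean z) * c $ v)"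
    by (intro sum.cong) (simp_all add: c_def power2_eq_square algebra_simps)
  also have "\<dots> = (z' - z) \<bullet> c - (mean z' - mean z) * (\<Sum>v\<in>UNIV. c $ v)"
    by (simp only: sum_subtractf sum_distrib_left inner_vec_def inner_real_def)
  finally show ?thesis
    unfolding centered c_def[symmetric] by simp
qed

lemma inner_le_l0norm:
  fixes d f :: "real^'n::finite"
  assumes "\<And>v. \<bar>d $ v\<bar> \<le> 1" and "\<And>v. \<bar>f $ v\<bar> \<le> B"
  shows "d \<bullet> f \<le> B * real (l0norm d)"
proof -
  have "d \<bullet> f = (\<Sum>v\<in>{v. d $ v \<noteq> 0}. d $ v * f $ v)"
    unfolding inner_vec_def inner_real_def by (intro sum.mono_neutral_right) auto
  also have "\<dots> \<le> (\<Sum>v\<in>{v. d $ v \<noteq> 0}. B)"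
  proof (rule sum_mono)
    fix v
    have "\<bar>d $ v\<bar> * \<bar>f $ v\<bar> \<le> 1 * B"
      using assms[of v] by (intro mult_mono) auto
    then show "d $ v * f $ v \<le> B"
      by (metis abs_ge_self abs_mult mult_1 order_trans)
  qed
  also have "\<dots> = B * real (l0norm d)"
    by (simp add: l0norm_def)
  finally show ?thesis .
qed

theorem theorem1p2:
  fixes w :: "'n::finite \<Rightarrow> 'n \<Rightarrow> real" and s s' :: "real^'n" and k :: nat
  assumes "weighted_graph w"
    and "\<forall>v. 0 \<le> s $ v \<and> s $ v \<le> 1"
    and "\<forall>v. 0 \<le> s' $ v \<and> s' $ v \<le> 1"
    and "l0norm (s' - s) \<le> k"
  shows "polarization (equilibrium w s') \<le> polarization (equilibrium w s) + 3 * real k"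
proof -
  have nonneg: "\<forall>u v. 0 \<le> w u v"
    using assms(1) by (simp add: weighted_graph_def)
  define z where "z = equilibrium w s"
  define z' where "z' = equilibrium w s'"
  define c where "c = (\<chi> v. z $ v + z' $ v - mean z - mean z')"
  have z_bounds: "0 \<le> z $ v \<and> z $ v \<le> 1" and z'_bounds: "0 \<le> z' $ v \<and> z' $ v \<le> 1" for v
    unfolding z_def z'_def using equilibrium_bounds[OF nonneg] assms(2,3) by blast+
  have "-2 \<le> c $ v \<and> c $ v \<le> 2" for v
    using z_bounds[of v] z'_bounds[of v] mean_bounds[OF z_bounds] mean_bounds[OF z'_bounds]
    by (auto simp: c_def)
  then have "\<bar>equilibrium w c $ v\<bar> \<le> 2" for v
    using equilibrium_bounds[OF nonneg, of "-2" c 2 v] by (simp add: abs_le_iff)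
  moreover have "\<bar>(s' - s) $ v\<bar> \<le> 1" for v
    using assms(2,3) by (auto simp: abs_le_iff dest!: spec[of _ v])
  moreover have "polarization z' - polarization z = (s' - s) \<bullet> equilibrium w c"
    unfolding polarization_diff c_def[symmetric] unfolding z_def z'_def equilibrium_diff
    by (rule equilibrium_inner_commute[OF assms(1)])
  ultimately have "polarization z' - polarization z \<le> 2 * real (l0norm (s' - s))"
    using inner_le_l0norm by metis
  then show ?thesis
    using assms(4) by (simp add: z_def z'_def)
qed

end
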